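(* Let $R$ be a commutative ring with identity and $M$ a non-zero comultiplication $R$-module. If $G'(M)$ is non-null and connected, then $\mathrm{diam}(G'(M))\le 2$.
   Context: An $R$-module $M$ is a comultiplication module if for every submodule $N$ of $M$ there is an ideal $I$ of $R$ with $N=\mathrm{Ann}_M(I)$. A submodule $N$ of $M$ is large if $N\cap L\neq 0$ for every non-zero submodule $L$ of $M$. The large sum graph $G'(M)$ has as vertex set the set of all non-zero non-large submodules of $M$, and two distinct vertices $N,K$ are adjacent iff $N+K$ is non-large in $M$. The diameter is the supremum of the distances between pairs of vertices. *)

theory Defs
  imports "HOL-Algebra.Module" "HOL-Algebra.Ideal" "HOL-Library.Extended_Nat"
begin

definition ann_M :: "('a, 'r) ring_scheme \<Rightarrow> ('a, 'b, 'm) module_scheme \<Rightarrow> 'a set \<Rightarrow> 'b set" where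
  "ann_M R M I = {x \<in> carrier M. \<forall>a \<in> I. a \<odot>\<^bsub>M\<^esub> x = \<zero>\<^bsub>M\<^esub>}"

definition comultiplication_module :: "('a, 'r) ring_scheme \<Rightarrow> ('a, 'b, 'm) module_scheme \<Rightarrow> bool" where
  "comultiplication_module R M \<longleftrightarrow> Module.module R M \<and>
     (\<forall>N. submodule N R M \<longrightarrow> (\<exists>I. ideal I R \<and> N = ann_M R M I))"

definition large_submodule :: "('a, 'r) ring_scheme \<Rightarrow> ('a, 'b, 'm) module_scheme \<Rightarrow> 'b set \<Rightarrow> bool" where
  "large_submodule R M N \<longleftrightarrow> submodule N R M \<and>
     (\<forall>L. submodule L R M \<and> L \<noteq> {\<zero>\<^bsub>M\<^esub>} \<longrightarrow> N \<inter> L \<noteq> {\<zero>\<^bsub>M\<^esub>})"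

definition msum :: "('a, 'b, 'm) module_scheme \<Rightarrow> 'b set \<Rightarrow> 'b set \<Rightarrow> 'b set" where
  "msum M N K = {x \<oplus>\<^bsub>M\<^esub> y | x y. x \<in> N \<and> y \<in> K}"

definition lsg_vertices :: "('a, 'r) ring_scheme \<Rightarrow> ('a, 'b, 'm) module_scheme \<Rightarrow> 'b set set" where
  "lsg_vertices R M = {N. submodule N R M \<and> N \<noteq> {\<zero>\<^bsub>M\<^esub>} \<and> \<not> large_submodule R M N}"

definition lsg_adj :: "('a, 'r) ring_scheme \<Rightarrow> ('a, 'b, 'm) module_scheme \<Rightarrow> 'b set \<Rightarrow> 'b set \<Rightarrow> bool" where
  "lsg_adj R M N K \<longleftrightarrow> N \<in> lsg_vertices R M \<and> K \<in> lsg_vertices R M \<and> N \<noteq> K \<and>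
     \<not> large_submodule R M (msum M N K)"

text \<open>Generic graph notions for a graph given by vertex set V and adjacency E
  (E only relates vertices, so E-walks stay inside V).\<close>
definition graph_connected :: "'v set \<Rightarrow> ('v \<Rightarrow> 'v \<Rightarrow> bool) \<Rightarrow> bool" where
  "graph_connected V E \<longleftrightarrow> (\<forall>u \<in> V. \<forall>v \<in> V. E\<^sup>*\<^sup>* u v)"

text \<open>Distance: length of a shortest walk (infinity if none).\<close>
definition graph_dist :: "('v \<Rightarrow> 'v \<Rightarrow> bool) \<Rightarrow> 'v \<Rightarrow> 'v \<Rightarrow> enat" where
  "graph_dist E u v = (INF n \<in> {n. (E ^^ n) u v}. enat n)"

definition graph_diam :: "'v set \<Rightarrow> ('v \<Rightarrow> 'v \<Rightarrow> bool) \<Rightarrow> enat" where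
  "graph_diam V E = (SUP u \<in> V. SUP v \<in> V. graph_dist E u v)"

end

theory Submission
  imports Defs
begin

text \<open>Let \<open>N \<noteq> K\<close> be non-adjacent vertices, so \<open>N + K\<close> is large. If \<open>N \<inter> K \<noteq> 0\<close>, it is a
  common neighbour. If \<open>N \<inter> K = 0\<close> and one of them, say \<open>K\<close>, contains non-zero submodules
  \<open>A\<close>, \<open>B\<close> with \<open>A \<inter> B = 0\<close>, then \<open>A\<close> is a common neighbour. Otherwise \<open>N\<close> and \<open>K\<close> are
  uniform; writing \<open>N = Ann(I)\<close>, \<open>K = Ann(J)\<close> by comultiplication, every non-zero submodule
  meets \<open>N\<close> or \<open>K\<close>, so any submodule meeting both is large. Hence no edge leads from a vertex
  missing \<open>K\<close> to one meeting \<open>K\<close>, and \<open>K\<close> is unreachable from \<open>N\<close>, contradicting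
  connectedness.\<close>

definition uniform_submodule :: "('a, 'r) ring_scheme \<Rightarrow> ('a, 'b, 'm) module_scheme \<Rightarrow> 'b set \<Rightarrow> bool" where
  "uniform_submodule R M N \<longleftrightarrow>
     (\<forall>A B. submodule A R M \<longrightarrow> submodule B R M \<longrightarrow> A \<subseteq> N \<longrightarrow> B \<subseteq> N \<longrightarrow>
        A \<noteq> {\<zero>\<^bsub>M\<^esub>} \<longrightarrow> B \<noteq> {\<zero>\<^bsub>M\<^esub>} \<longrightarrow> A \<inter> B \<noteq> {\<zero>\<^bsub>M\<^esub>})"

context Module.module
begin

lemma submodule_zero_closed: "submodule H R M \<Longrightarrow> \<zero>\<^bsub>M\<^esub> \<in> H"
  using subgroup.one_closed[OF submodule.axioms(1)] by fastforce

lemma submodule_Int: "submodule A R M \<Longrightarrow> submodule B R M \<Longrightarrow> submodule (A \<inter> B) R M"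
  by (intro submoduleI) (auto dest: submoduleE submodule_zero_closed)

lemma submodule_Int_nonzero_mono:
  assumes "submodule A R M" "submodule N R M" "A \<inter> N \<noteq> {\<zero>\<^bsub>M\<^esub>}" "A \<subseteq> S"
  shows "S \<inter> N \<noteq> {\<zero>\<^bsub>M\<^esub>}"
proof -
  have "\<zero>\<^bsub>M\<^esub> \<in> A \<inter> N"
    using assms(1,2) submodule_zero_closed by blast
  then obtain x where "x \<in> A \<inter> N" "x \<noteq> \<zero>\<^bsub>M\<^esub>"
    using assms(3) by blast
  then show ?thesis
    using assms(4) by blast
qed

lemma msum_submodule:
  assumes N: "submodule N R M" and K: "submodule K R M"
  shows "submodule (msum M N K) R M"
proof (rule submoduleI)
  note carr = submoduleE(1)[OF N] submoduleE(1)[OF K]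
  show "msum M N K \<subseteq> carrier M"
    using carr unfolding msum_def by blast
  show "\<zero>\<^bsub>M\<^esub> \<in> msum M N K"
    unfolding msum_def using N K submodule_zero_closed by force
  show "\<ominus>\<^bsub>M\<^esub> z \<in> msum M N K" if "z \<in> msum M N K" for z
  proof -
    from that obtain x y where "x \<in> N" "y \<in> K" "z = x \<oplus>\<^bsub>M\<^esub> y" unfolding msum_def by blast
    moreover have "\<ominus>\<^bsub>M\<^esub> (x \<oplus>\<^bsub>M\<^esub> y) = \<ominus>\<^bsub>M\<^esub> x \<oplus>\<^bsub>M\<^esub> \<ominus>\<^bsub>M\<^esub> y"
      using calculation carr by (simp add: M.minus_add subsetD)
    ultimately show ?thesis
      unfolding msum_def using submoduleE(3)[OF N] submoduleE(3)[OF K] by blast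
  qed
  show "z \<oplus>\<^bsub>M\<^esub> w \<in> msum M N K" if "z \<in> msum M N K" "w \<in> msum M N K" for z w
  proof -
    from that obtain x y x' y' where "x \<in> N" "y \<in> K" "z = x \<oplus>\<^bsub>M\<^esub> y"
      and "x' \<in> N" "y' \<in> K" "w = x' \<oplus>\<^bsub>M\<^esub> y'" unfolding msum_def by blast
    moreover have "(x \<oplus>\<^bsub>M\<^esub> y) \<oplus>\<^bsub>M\<^esub> (x' \<oplus>\<^bsub>M\<^esub> y') = (x \<oplus>\<^bsub>M\<^esub> x') \<oplus>\<^bsub>M\<^esub> (y \<oplus>\<^bsub>M\<^esub> y')"
      using calculation carr by (simp add: M.a_ac subsetD)
    ultimately show ?thesis
      unfolding msum_def using submoduleE(5)[OF N] submoduleE(5)[OF K] by blast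
  qed
  show "a \<odot>\<^bsub>M\<^esub> z \<in> msum M N K" if "a \<in> carrier R" "z \<in> msum M N K" for a z
  proof -
    from that obtain x y where "x \<in> N" "y \<in> K" "z = x \<oplus>\<^bsub>M\<^esub> y" unfolding msum_def by blast
    moreover have "a \<odot>\<^bsub>M\<^esub> (x \<oplus>\<^bsub>M\<^esub> y) = a \<odot>\<^bsub>M\<^esub> x \<oplus>\<^bsub>M\<^esub> a \<odot>\<^bsub>M\<^esub> y"
      using calculation carr that(1) by (simp add: smult_r_distr subsetD)
    ultimately show ?thesis
      unfolding msum_def using submoduleE(4)[OF N] submoduleE(4)[OF K] that(1) by blast
  qed
qed

lemma msum_commute: "submodule N R M \<Longrightarrow> submodule K R M \<Longrightarrow> msum M N K = msum M K N"
  unfolding msum_def by (metis (no_types, lifting) submoduleE(1) subsetD M.a_comm)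

lemma msum_upper1: "submodule N R M \<Longrightarrow> submodule K R M \<Longrightarrow> N \<subseteq> msum M N K"
  unfolding msum_def by (force dest: submodule_zero_closed submoduleE(1))

lemma msum_upper2: "submodule N R M \<Longrightarrow> submodule K R M \<Longrightarrow> K \<subseteq> msum M N K"
  using msum_upper1 msum_commute by blast

lemma msum_absorb: "submodule N R M \<Longrightarrow> submodule K R M \<Longrightarrow> K \<subseteq> N \<Longrightarrow> msum M N K = N"
  using msum_upper1[of N K] unfolding msum_def by (auto dest: submoduleE(5))

lemma large_submodule_mono:
  "large_submodule R M L \<Longrightarrow> L \<subseteq> N \<Longrightarrow> submodule N R M \<Longrightarrow> large_submodule R M N"
  unfolding large_submodule_def by (blast dest: submodule_zero_closed)

lemma uniform_submoduleD:
  assumes "submodule N R M" "uniform_submodule R M N" "submodule X R M" "submodule Y R M"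
    and "X \<inter> N \<noteq> {\<zero>\<^bsub>M\<^esub>}" "Y \<inter> N \<noteq> {\<zero>\<^bsub>M\<^esub>}"
  shows "X \<inter> Y \<noteq> {\<zero>\<^bsub>M\<^esub>}"
proof -
  have "(X \<inter> N) \<inter> (Y \<inter> N) \<noteq> {\<zero>\<^bsub>M\<^esub>}"
    using assms unfolding uniform_submodule_def by (meson Int_lower2 submodule_Int)
  then show ?thesis
    using assms(1,3,4) submodule_zero_closed by blast
qed

text \<open>The only use of the comultiplication property: if \<open>y = n + k\<close> with \<open>n \<in> N = Ann(I)\<close>,
  then \<open>I y = I k \<subseteq> Y \<inter> K = 0\<close>, which puts \<open>k\<close> into \<open>Ann(I) \<inter> K = 0\<close>.\<close>
lemma ann_large_sum_complement_meets:
  assumes N: "N = ann_M R M I" "I \<subseteq> carrier R" and K: "submodule K R M"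
    and sN: "submodule N R M" and NK: "N \<inter> K = {\<zero>\<^bsub>M\<^esub>}"
    and large: "large_submodule R M (msum M N K)"
    and Y: "submodule Y R M" "Y \<noteq> {\<zero>\<^bsub>M\<^esub>}" "Y \<inter> N = {\<zero>\<^bsub>M\<^esub>}"
  shows "Y \<inter> K \<noteq> {\<zero>\<^bsub>M\<^esub>}"
proof
  assume YK: "Y \<inter> K = {\<zero>\<^bsub>M\<^esub>}"
  have "msum M N K \<inter> Y \<noteq> {\<zero>\<^bsub>M\<^esub>}"
    using large Y(1,2) unfolding large_submodule_def by blast
  then obtain y where y: "y \<in> msum M N K" "y \<in> Y" "y \<noteq> \<zero>\<^bsub>M\<^esub>"
    using submodule_zero_closed[OF Y(1)] submodule_zero_closed[OF msum_submodule[OF sN K]] by blast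
  then obtain n k where nk: "n \<in> N" "k \<in> K" "y = n \<oplus>\<^bsub>M\<^esub> k"
    unfolding msum_def by blast
  have carr: "n \<in> carrier M" "k \<in> carrier M"
    using nk submoduleE(1)[OF sN] submoduleE(1)[OF K] by blast+
  have "k \<in> ann_M R M I"
    unfolding ann_M_def
  proof (intro CollectI conjI ballI carr(2))
    fix a assume "a \<in> I"
    then have a: "a \<in> carrier R" "a \<odot>\<^bsub>M\<^esub> n = \<zero>\<^bsub>M\<^esub>"
      using N nk(1) unfolding ann_M_def by blast+
    have "a \<odot>\<^bsub>M\<^esub> y = a \<odot>\<^bsub>M\<^esub> n \<oplus>\<^bsub>M\<^esub> a \<odot>\<^bsub>M\<^esub> k"
      using nk(3) carr a(1) smult_r_distr by blast
    also have "\<dots> = a \<odot>\<^bsub>M\<^esub> k"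
      using a carr by simp
    finally have "a \<odot>\<^bsub>M\<^esub> y = a \<odot>\<^bsub>M\<^esub> k" .
    moreover have "a \<odot>\<^bsub>M\<^esub> y \<in> Y" "a \<odot>\<^bsub>M\<^esub> k \<in> K"
      using a(1) y(2) nk(2) submoduleE(4)[OF Y(1)] submoduleE(4)[OF K] by blast+
    ultimately have "a \<odot>\<^bsub>M\<^esub> k \<in> Y \<inter> K"
      by (metis IntI)
    then show "a \<odot>\<^bsub>M\<^esub> k = \<zero>\<^bsub>M\<^esub>"
      using YK by simp
  qed
  then have "k \<in> N \<inter> K"
    using N(1) nk(2) by simp
  then have "k = \<zero>\<^bsub>M\<^esub>"
    using NK by simp
  then have "y \<in> Y \<inter> N"
    using nk carr y(2) by simp
  then show False
    using Y(3) y(3) by blast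
qed

lemma large_submodule_if_meets_uniform_summands:
  assumes N: "submodule N R M" "uniform_submodule R M N"
    and K: "submodule K R M" "uniform_submodule R M K"
    and cover: "\<And>Y. submodule Y R M \<Longrightarrow> Y \<noteq> {\<zero>\<^bsub>M\<^esub>} \<Longrightarrow> Y \<inter> N = {\<zero>\<^bsub>M\<^esub>} \<Longrightarrow> Y \<inter> K \<noteq> {\<zero>\<^bsub>M\<^esub>}"
    and S: "submodule S R M" "S \<inter> N \<noteq> {\<zero>\<^bsub>M\<^esub>}" "S \<inter> K \<noteq> {\<zero>\<^bsub>M\<^esub>}"
  shows "large_submodule R M S"
  unfolding large_submodule_def
proof (intro conjI allI impI S(1), elim conjE)
  fix Y assume Y: "submodule Y R M" "Y \<noteq> {\<zero>\<^bsub>M\<^esub>}"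
  show "S \<inter> Y \<noteq> {\<zero>\<^bsub>M\<^esub>}"
  proof (cases "Y \<inter> N = {\<zero>\<^bsub>M\<^esub>}")
    case True
    then have "Y \<inter> K \<noteq> {\<zero>\<^bsub>M\<^esub>}"
      using cover Y by blast
    then show ?thesis
      by (rule uniform_submoduleD[OF K S(1) Y(1) S(3)])
  next
    case False
    then show ?thesis
      by (rule uniform_submoduleD[OF N S(1) Y(1) S(2)])
  qed
qed

lemma comultiplication_moduleE:
  assumes "comultiplication_module R M" "submodule N R M"
  obtains I where "I \<subseteq> carrier R" "N = ann_M R M I"
proof -
  obtain I where "ideal I R" "N = ann_M R M I"
    using assms unfolding comultiplication_module_def by blast
  then show thesis
    using that additive_subgroup.a_subset[OF ideal.axioms(1)] by blast
qed

lemma lsg_verticesD: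
  assumes "N \<in> lsg_vertices R M"
  shows "submodule N R M" "N \<noteq> {\<zero>\<^bsub>M\<^esub>}" "\<not> large_submodule R M N"
  using assms unfolding lsg_vertices_def by blast+

lemma lsg_adj_sym: "lsg_adj R M N K \<Longrightarrow> lsg_adj R M K N"
  unfolding lsg_adj_def using msum_commute lsg_verticesD(1) by metis

lemma lsg_common_neighbour_Int:
  assumes N: "N \<in> lsg_vertices R M" and K: "K \<in> lsg_vertices R M"
    and large: "large_submodule R M (msum M N K)" and NK: "N \<inter> K \<noteq> {\<zero>\<^bsub>M\<^esub>}"
  shows "lsg_adj R M N (N \<inter> K) \<and> lsg_adj R M (N \<inter> K) K"
proof -
  note sN = lsg_verticesD(1)[OF N] and sK = lsg_verticesD(1)[OF K]
  have sNK: "submodule (N \<inter> K) R M"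
    using sN sK by (rule submodule_Int)
  have "\<not> K \<subseteq> N"
    using msum_absorb[OF sN sK] large lsg_verticesD(3)[OF N] by auto
  moreover have "\<not> N \<subseteq> K"
    using msum_absorb[OF sK sN] msum_commute[OF sN sK] large lsg_verticesD(3)[OF K] by auto
  moreover have "N \<inter> K \<in> lsg_vertices R M"
    unfolding lsg_vertices_def
    using sNK NK large_submodule_mono[OF _ _ sN] lsg_verticesD(3)[OF N] by blast
  moreover have "msum M N (N \<inter> K) = N" "msum M (N \<inter> K) K = K"
    using msum_absorb[OF sN sNK] msum_absorb[OF sK sNK] msum_commute[OF sNK sK] by auto
  ultimately show ?thesis
    unfolding lsg_adj_def using N K lsg_verticesD(3) by auto
qed

text \<open>The common neighbour is \<open>A\<close>: \<open>N + A\<close> is not large because \<open>(N + A) \<inter> B = 0\<close>.\<close>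
lemma lsg_common_neighbour_if_not_uniform:
  assumes N: "N \<in> lsg_vertices R M" and K: "K \<in> lsg_vertices R M"
    and NK: "N \<inter> K = {\<zero>\<^bsub>M\<^esub>}" and not_uniform: "\<not> uniform_submodule R M K"
  shows "\<exists>L. lsg_adj R M N L \<and> lsg_adj R M L K"
proof -
  note sN = lsg_verticesD(1)[OF N] and sK = lsg_verticesD(1)[OF K]
  obtain A B where A: "submodule A R M" "A \<subseteq> K" "A \<noteq> {\<zero>\<^bsub>M\<^esub>}"
    and B: "submodule B R M" "B \<subseteq> K" "B \<noteq> {\<zero>\<^bsub>M\<^esub>}" and AB: "A \<inter> B = {\<zero>\<^bsub>M\<^esub>}"
    using not_uniform unfolding uniform_submodule_def by blast
  have sNA: "submodule (msum M N A) R M"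
    using sN A(1) by (rule msum_submodule)
  have "msum M N A \<inter> B \<subseteq> {\<zero>\<^bsub>M\<^esub>}"
  proof
    fix y assume y: "y \<in> msum M N A \<inter> B"
    then obtain n a where na: "n \<in> N" "a \<in> A" "y = n \<oplus>\<^bsub>M\<^esub> a"
      unfolding msum_def by blast
    have carr: "n \<in> carrier M" "a \<in> carrier M"
      using na submoduleE(1)[OF sN] submoduleE(1)[OF A(1)] by blast+
    have "n = y \<oplus>\<^bsub>M\<^esub> \<ominus>\<^bsub>M\<^esub> a"
      using na(3) carr by (simp add: M.a_assoc M.r_neg)
    also have "\<dots> \<in> K"
      using y na(2) A(2) B(2) submoduleE(3,5)[OF sK] by blast
    finally have "n = \<zero>\<^bsub>M\<^esub>"
      using na(1) NK by blast
    then have "y \<in> A \<inter> B"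
      using na carr y by simp
    then show "y \<in> {\<zero>\<^bsub>M\<^esub>}"
      using AB by simp
  qed
  then have "\<not> large_submodule R M (msum M N A)"
    using B(1,3) submodule_zero_closed[OF sNA] submodule_zero_closed[OF B(1)]
    unfolding large_submodule_def by blast
  moreover have "A \<in> lsg_vertices R M"
    using A B AB unfolding lsg_vertices_def large_submodule_def by blast
  moreover have "A \<noteq> N"
    using A(2) NK lsg_verticesD(2)[OF N] by blast
  moreover have "A \<noteq> K"
    using B(2,3) AB by blast
  moreover have "msum M A K = K"
    using msum_commute[OF A(1) sK] msum_absorb[OF sK A(1) A(2)] by simp
  ultimately show ?thesis
    unfolding lsg_adj_def using N K lsg_verticesD(3)[OF K] by metis
qed

lemma lsg_not_reachable_if_uniform:
  assumes cm: "comultiplication_module R M"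
    and N: "N \<in> lsg_vertices R M" and K: "K \<in> lsg_vertices R M"
    and NK: "N \<inter> K = {\<zero>\<^bsub>M\<^esub>}" and large: "large_submodule R M (msum M N K)"
    and uN: "uniform_submodule R M N" and uK: "uniform_submodule R M K"
  shows "\<not> (lsg_adj R M)\<^sup>*\<^sup>* N K"
proof
  note sN = lsg_verticesD(1)[OF N] and sK = lsg_verticesD(1)[OF K]
  obtain I where I: "I \<subseteq> carrier R" "N = ann_M R M I"
    using comultiplication_moduleE[OF cm sN] .
  obtain J where J: "J \<subseteq> carrier R" "K = ann_M R M J"
    using comultiplication_moduleE[OF cm sK] .
  have meets_K: "Y \<inter> K \<noteq> {\<zero>\<^bsub>M\<^esub>}"
    if "submodule Y R M" "Y \<noteq> {\<zero>\<^bsub>M\<^esub>}" "Y \<inter> N = {\<zero>\<^bsub>M\<^esub>}" for Y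
    using ann_large_sum_complement_meets[OF I(2,1) sK sN NK large that] .
  have meets_N: "Y \<inter> N \<noteq> {\<zero>\<^bsub>M\<^esub>}"
    if "submodule Y R M" "Y \<noteq> {\<zero>\<^bsub>M\<^esub>}" "Y \<inter> K = {\<zero>\<^bsub>M\<^esub>}" for Y
    using ann_large_sum_complement_meets[OF J(2,1) sN sK _ _ that] NK large msum_commute[OF sN sK]
    by (simp add: Int_commute)
  have "Z \<inter> K = {\<zero>\<^bsub>M\<^esub>}" if "(lsg_adj R M)\<^sup>*\<^sup>* N Z" for Z
    using that
  proof (induction rule: rtranclp_induct)
    case base
    show ?case by (rule NK)
  next
    case (step X Z)
    have X: "submodule X R M" "X \<noteq> {\<zero>\<^bsub>M\<^esub>}" and sZ: "submodule Z R M"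
      and not_large: "\<not> large_submodule R M (msum M X Z)"
      using step.hyps(2) lsg_verticesD unfolding lsg_adj_def by blast+
    have sXZ: "submodule (msum M X Z) R M"
      using X(1) sZ by (rule msum_submodule)
    show ?case
    proof (rule ccontr)
      assume ZK: "Z \<inter> K \<noteq> {\<zero>\<^bsub>M\<^esub>}"
      have "msum M X Z \<inter> N \<noteq> {\<zero>\<^bsub>M\<^esub>}"
        using submodule_Int_nonzero_mono[OF X(1) sN meets_N[OF X step.IH] msum_upper1[OF X(1) sZ]] .
      moreover have "msum M X Z \<inter> K \<noteq> {\<zero>\<^bsub>M\<^esub>}"
        using submodule_Int_nonzero_mono[OF sZ sK ZK msum_upper2[OF X(1) sZ]] .
      ultimately have "large_submodule R M (msum M X Z)"
        using large_submodule_if_meets_uniform_summands[OF sN uN sK uK meets_K sXZ] by blast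
      then show False
        using not_large by blast
    qed
  qed
  moreover assume "(lsg_adj R M)\<^sup>*\<^sup>* N K"
  ultimately show False
    using lsg_verticesD(2)[OF K] by blast
qed

lemma lsg_common_neighbour:
  assumes cm: "comultiplication_module R M"
    and conn: "graph_connected (lsg_vertices R M) (lsg_adj R M)"
    and N: "N \<in> lsg_vertices R M" and K: "K \<in> lsg_vertices R M"
    and "N \<noteq> K" and "\<not> lsg_adj R M N K"
  shows "\<exists>L. lsg_adj R M N L \<and> lsg_adj R M L K"
proof -
  have large: "large_submodule R M (msum M N K)"
    using assms(5,6) N K unfolding lsg_adj_def by blast
  consider "N \<inter> K \<noteq> {\<zero>\<^bsub>M\<^esub>}"
    | "N \<inter> K = {\<zero>\<^bsub>M\<^esub>}" "\<not> uniform_submodule R M K"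
    | "N \<inter> K = {\<zero>\<^bsub>M\<^esub>}" "\<not> uniform_submodule R M N"
    | "N \<inter> K = {\<zero>\<^bsub>M\<^esub>}" "uniform_submodule R M N" "uniform_submodule R M K"
    by blast
  then show ?thesis
  proof cases
    case 1
    then show ?thesis
      using lsg_common_neighbour_Int[OF N K large] by blast
  next
    case 2
    then show ?thesis
      using lsg_common_neighbour_if_not_uniform[OF N K] by blast
  next
    case 3
    then have "K \<inter> N = {\<zero>\<^bsub>M\<^esub>}" by blast
    then show ?thesis
      using lsg_common_neighbour_if_not_uniform[OF K N _ 3(2)] lsg_adj_sym by blast
  next
    case 4
    then show ?thesis
      using lsg_not_reachable_if_uniform[OF cm N K _ large] conn N K
      unfolding graph_connected_def by blast
  qed
qed

end

lemma graph_diam_le_2: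
  assumes "\<And>u v. u \<in> V \<Longrightarrow> v \<in> V \<Longrightarrow> u = v \<or> E u v \<or> (\<exists>w. E u w \<and> E w v)"
  shows "graph_diam V E \<le> 2"
  unfolding graph_diam_def
proof (intro SUP_least)
  fix u v assume "u \<in> V" "v \<in> V"
  then have "u = v \<or> E u v \<or> (\<exists>w. E u w \<and> E w v)"
    by (rule assms)
  then obtain n where "n \<le> 2" "(E ^^ n) u v"
  proof (elim disjE exE conjE)
    assume "u = v"
    then show thesis
      using that[of 0] by simp
  next
    assume "E u v"
    then have "(E ^^ Suc 0) u v"
      by (intro relpowp_Suc_I[OF relpowp_0_I])
    then show thesis
      using that[of 1] by simp
  next
    fix w assume "E u w" "E w v"
    then have "(E ^^ Suc (Suc 0)) u v"
      by (intro relpowp_Suc_I[OF relpowp_Suc_I[OF relpowp_0_I]])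
    then show thesis
      using that[of 2] by (simp add: numeral_2_eq_2)
  qed
  then have "graph_dist E u v \<le> enat n"
    unfolding graph_dist_def by (auto intro: INF_lower)
  also have "\<dots> \<le> 2"
    using \<open>n \<le> 2\<close> by (simp add: numeral_eq_enat)
  finally show "graph_dist E u v \<le> 2" .
qed

theorem theorem2p7:
  fixes R :: "('a, 'r) ring_scheme" and M :: "('a, 'b, 'm) module_scheme"
  assumes "cring R"
    and "Module.module R M"
    and "carrier M \<noteq> {\<zero>\<^bsub>M\<^esub>}"
    and "comultiplication_module R M"
    and "lsg_vertices R M \<noteq> {}"
    and "graph_connected (lsg_vertices R M) (lsg_adj R M)"
  shows "graph_diam (lsg_vertices R M) (lsg_adj R M) \<le> 2"
proof (rule graph_diam_le_2)
  interpret Module.module R M by fact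
  fix N K assume "N \<in> lsg_vertices R M" "K \<in> lsg_vertices R M"
  then show "N = K \<or> lsg_adj R M N K \<or> (\<exists>L. lsg_adj R M N L \<and> lsg_adj R M L K)"
    using lsg_common_neighbour[OF assms(4,6)] by blast
qed

end
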